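(* Let $(s_1,s_2)$ and $(s'_1,s'_2)$ be two ordered pairs of involutive elements of $S_n$ and $\beta,\beta'$ their dihedral decompositions. Then $(s_1,s_2)$ is conjugate to $(s'_1,s'_2)$ (i.e. $s'_i=gs_ig^{-1}$, $i=1,2$, for some $g\in S_n$) if and only if $\beta=\beta'$.
   Context: An involutive element is $s\in S_n$ with $s^2=1$ (the identity included). Given an ordered pair $(s_1,s_2)$ of involutions, the infinite dihedral group $D_\infty=\langle\sigma_1,\sigma_2\mid\sigma_1^2=\sigma_2^2=1\rangle$ acts on $\{1,\dots,n\}$ via $\sigma_i\mapsto s_i$. Each orbit is of one of four types: type 1: neither $\sigma_1$ nor $\sigma_2$ has a fixed point in it (even size); type 2: each of $\sigma_1,\sigma_2$ has exactly one fixed point (odd size); type 3: $\sigma_1$ has two fixed points and $\sigma_2$ none (even size); type 4: $\sigma_1$ has none and $\sigma_2$ has two fixed points (even size). The dihedral decomposition of $(s_1,s_2)$ is the collection, for each type $t=1,2,3,4$, of the unordered multiset of sizes of the orbits of type $t$. *)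

theory Defs
  imports "HOL-Combinatorics.Permutations" "HOL-Library.Multiset"
begin

definition involution_Sn :: "nat \<Rightarrow> (nat \<Rightarrow> nat) \<Rightarrow> bool" where
  "involution_Sn n s \<longleftrightarrow> s permutes {1..n} \<and> s \<circ> s = id"

text \<open>One-step relation of the action of the infinite dihedral group generated by sigma_1, sigma_2
  acting via s1, s2; orbits are classes of its reflexive transitive closure.\<close>

definition dih_step :: "(nat \<Rightarrow> nat) \<Rightarrow> (nat \<Rightarrow> nat) \<Rightarrow> (nat \<times> nat) set" where
  "dih_step s1 s2 = {(x, s1 x) | x. True} \<union> {(x, s2 x) | x. True}"

definition dih_orbit :: "(nat \<Rightarrow> nat) \<Rightarrow> (nat \<Rightarrow> nat) \<Rightarrow> nat \<Rightarrow> nat set" where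
  "dih_orbit s1 s2 x = {y. (x, y) \<in> (dih_step s1 s2)\<^sup>*}"

definition dih_orbits :: "nat \<Rightarrow> (nat \<Rightarrow> nat) \<Rightarrow> (nat \<Rightarrow> nat) \<Rightarrow> nat set set" where
  "dih_orbits n s1 s2 = dih_orbit s1 s2 ` {1..n}"

definition num_fixed :: "(nat \<Rightarrow> nat) \<Rightarrow> nat set \<Rightarrow> nat" where
  "num_fixed s Orb = card {x \<in> Orb. s x = x}"

text \<open>Type of an orbit (0 if it fits none of the four types; this never happens for involutions).\<close>

definition orbit_type :: "(nat \<Rightarrow> nat) \<Rightarrow> (nat \<Rightarrow> nat) \<Rightarrow> nat set \<Rightarrow> nat" where
  "orbit_type s1 s2 Orb =
     (if num_fixed s1 Orb = 0 \<and> num_fixed s2 Orb = 0 then 1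
      else if num_fixed s1 Orb = 1 \<and> num_fixed s2 Orb = 1 then 2
      else if num_fixed s1 Orb = 2 \<and> num_fixed s2 Orb = 0 then 3
      else if num_fixed s1 Orb = 0 \<and> num_fixed s2 Orb = 2 then 4
      else 0)"

definition dihedral_decomp :: "nat \<Rightarrow> (nat \<Rightarrow> nat) \<Rightarrow> (nat \<Rightarrow> nat) \<Rightarrow> nat \<Rightarrow> nat multiset" where
  "dihedral_decomp n s1 s2 t =
     (if t \<in> {1..4}
      then image_mset card (mset_set {Orb \<in> dih_orbits n s1 s2. orbit_type s1 s2 Orb = t})
      else {#})"

end

theory Submission
  imports Defs "HOL-Combinatorics.Cycles" "HOL-Library.Disjoint_Sets"
begin

text \<open>Let \<open>\<rho> = s2 \<circ> s1\<close>. Both involutions conjugate \<open>\<rho>\<close> to its inverse, so the orbit of a point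
  \<open>x\<close> consists of the points \<open>\<rho>\<^sup>j x\<close> and \<open>\<rho>\<^sup>j (s1 x)\<close>. If \<open>s1\<close> fixes \<open>x\<close>, or if no point of the
  orbit is fixed by \<open>s1\<close> or \<open>s2\<close>, which of these points coincide is decided by the period \<open>r\<close> of
  \<open>\<rho>\<close> at \<open>x\<close> and by whether \<open>s1\<close> fixes \<open>x\<close>; the orbit then has \<open>r\<close>, respectively \<open>2 r\<close>, points.
  Counting the solutions of \<open>2 j \<equiv> 0\<close> and \<open>2 j \<equiv> 1\<close> modulo \<open>r\<close> shows that on an orbit through a
  fixed point of \<open>s1\<close> the involution \<open>s1\<close> has 1 or 2 and \<open>s2\<close> has 1 or 0 fixed points, according to
  the parity of \<open>r\<close>. Hence every orbit has one of the four types, and two orbits (of possibly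
  different pairs) of the same type and size are isomorphic as sets with two involutions. Equal
  dihedral decompositions thus give a bijection between the orbits of the two pairs respecting type
  and size, and gluing the isomorphisms of corresponding orbits yields a permutation \<open>g\<close> with
  \<open>g \<circ> s\<^sub>i = s\<^sub>i' \<circ> g\<close>. Conversely, such a \<open>g\<close> maps orbits to orbits of the same type and size.\<close>

section \<open>Solutions of \<open>2 j \<equiv> k\<close> modulo \<open>R\<close>\<close>

lemma double_dvd_double_iff:
  fixes m d :: int
  shows "2 * m dvd 2 * d \<longleftrightarrow> 2 * m dvd d \<or> 2 * m dvd d - m"
proof
  assume "2 * m dvd 2 * d"
  then have "m dvd d"
    by simp
  then obtain q where q: "d = m * q" ..
  show "2 * m dvd d \<or> 2 * m dvd d - m"
  proof (cases "even q")
    case True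
    then obtain q' where "q = 2 * q'" by (rule evenE)
    then show ?thesis using q by simp
  next
    case False
    then obtain q' where "q = 2 * q' + 1" by (rule oddE)
    then have "d - m = 2 * m * q'" using q by (simp add: algebra_simps)
    then show ?thesis by simp
  qed
next
  assume "2 * m dvd d \<or> 2 * m dvd d - m"
  then have "m dvd d \<or> m dvd d - m"
    by (auto dest: dvd_mult_right)
  then have "m dvd d"
    by (metis diff_add_cancel dvd_add dvd_refl)
  then show "2 * m dvd 2 * d"
    by simp
qed

lemma odd_dvd_double_diff_iff:
  fixes R k :: int
  assumes "odd R"
  shows "\<exists>c. \<forall>j. R dvd 2 * j - k \<longleftrightarrow> R dvd j - c"
proof -
  obtain h where h: "R + 1 = 2 * h"
    using assms by (metis even_plus_one_iff evenE)
  have "R dvd 2 * j - k \<longleftrightarrow> R dvd j - k * h" for j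
  proof -
    have shift: "2 * j - k = 2 * (j - k * h) + k * R"
      using h by algebra
    have "R dvd 2 * j - k \<longleftrightarrow> R dvd 2 * (j - k * h)"
      unfolding shift by (rule dvd_add_left_iff) simp
    also have "\<dots> \<longleftrightarrow> R dvd j - k * h"
      by (rule coprime_dvd_mult_right_iff) (simp add: assms)
    finally show ?thesis .
  qed
  then show ?thesis
    by blast
qed

lemma card_image_solutions_double:
  fixes p :: "int \<Rightarrow> 'a" and R :: nat and k :: int
  assumes "0 < R" and kernel: "\<And>i j. p i = p j \<longleftrightarrow> int R dvd i - j"
  shows "card (p ` {j. int R dvd 2 * j - k}) = (if odd R then 1 else if even k then 2 else 0)"
proof -
  have image_class: "p ` {j. int R dvd j - c} = {p c}" for c
    using kernel by auto
  consider (odd_R) "odd R" | (even_k) m l where "R = 2 * m" "k = 2 * l" | (odd_k) "even R" "odd k"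
    by (metis evenE)
  then show ?thesis
  proof cases
    case odd_R
    then have "odd (int R)"
      by simp
    then obtain c where "\<forall>j. int R dvd 2 * j - k \<longleftrightarrow> int R dvd j - c"
      using odd_dvd_double_diff_iff by blast
    then have "{j. int R dvd 2 * j - k} = {j. int R dvd j - c}"
      by simp
    then show ?thesis
      using odd_R by (simp add: image_class)
  next
    case even_k
    have "int R dvd 2 * j - k \<longleftrightarrow> int R dvd j - l \<or> int R dvd j - (l + int m)" for j
      using double_dvd_double_iff[of "int m" "j - l"] even_k by (simp add: algebra_simps)
    then have "{j. int R dvd 2 * j - k} = {j. int R dvd j - l} \<union> {j. int R dvd j - (l + int m)}"
      by blast
    then have "p ` {j. int R dvd 2 * j - k} = {p l, p (l + int m)}"
      by (simp add: image_Un image_class insert_commute)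
    moreover have "p l \<noteq> p (l + int m)"
    proof
      assume "p l = p (l + int m)"
      then have "int R dvd int m"
        using kernel by simp
      then show False
        using even_k assms(1) by (simp add: nat_dvd_not_less)
    qed
    ultimately show ?thesis
      using even_k by simp
  next
    case odd_k
    have "\<not> int R dvd 2 * j - k" for j
    proof
      assume "int R dvd 2 * j - k"
      then have "2 dvd 2 * j - k"
        using odd_k dvd_trans even_of_nat by blast
      with odd_k show False
        by simp
    qed
    then show ?thesis
      using odd_k by simp
  qed
qed

lemma card_fixed_points_reflection:
  fixes p :: "int \<Rightarrow> 'a" and R :: nat and c :: int
  assumes "0 < R" and kernel: "\<And>i j. p i = p j \<longleftrightarrow> int R dvd i - j"
    and reflection: "\<And>j. f (p j) = p (c - j)"
  shows "card {y \<in> range p. f y = y} = (if odd R then 1 else if even c then 2 else 0)"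
proof -
  have "f (p j) = p j \<longleftrightarrow> int R dvd 2 * j - c" for j
  proof -
    have "f (p j) = p j \<longleftrightarrow> int R dvd (c - j) - j"
      by (simp only: reflection kernel)
    also have "(c - j) - j = - (2 * j - c)"
      by simp
    finally show ?thesis
      by (simp only: dvd_minus_iff)
  qed
  then have "{y \<in> range p. f y = y} = p ` {j. int R dvd 2 * j - c}"
    by auto
  then show ?thesis
    using card_image_solutions_double[OF assms(1) kernel] by simp
qed

lemma bij_betw_range_if_same_kernel:
  assumes "\<And>i j. p i = p j \<longleftrightarrow> q i = q j"
  obtains h where "bij_betw h (range p) (range q)" and "\<And>i. h (p i) = q i"
proof
  define h where "h y = q (inv p y)" for y
  show h_p: "h (p i) = q i" for i
    unfolding h_def using assms[of "inv p (p i)" i] by (simp add: f_inv_into_f)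
  show "bij_betw h (range p) (range q)"
    unfolding bij_betw_def inj_on_def by (auto simp: h_p assms image_iff)
qed

lemma bij_betw_if_image_mset_eq:
  assumes "finite A" and "finite B" and "image_mset f (mset_set A) = image_mset f (mset_set B)"
  shows "\<exists>\<phi>. bij_betw \<phi> A B \<and> (\<forall>a\<in>A. f (\<phi> a) = f a)"
  using assms
proof (induction A arbitrary: B rule: finite_induct)
  case empty
  then show ?case by (auto simp: mset_set_empty_iff bij_betw_def)
next
  case (insert a A)
  then have "f a \<in># image_mset f (mset_set B)"
    by (metis image_mset_add_mset mset_set.insert union_single_eq_member)
  then obtain b where b: "b \<in> B" "f b = f a"
    using insert.prems(1) by auto
  then have "image_mset f (mset_set A) = image_mset f (mset_set (B - {b}))"
    using insert by (simp add: mset_set.remove)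
  then obtain \<phi> where \<phi>: "bij_betw \<phi> A (B - {b})" "\<forall>a\<in>A. f (\<phi> a) = f a"
    using insert.IH insert.prems(1) by blast
  have "bij_betw (\<phi>(a := b)) A (B - {b})"
    using \<phi>(1) insert.hyps(2) by (subst bij_betw_cong[where g = \<phi>]) auto
  then have "bij_betw (\<phi>(a := b)) (insert a A) (insert b (B - {b}))"
    using notIn_Un_bij_betw3[of a A "\<phi>(a := b)" "B - {b}"] insert.hyps(2) by simp
  moreover have "insert b (B - {b}) = B"
    using b(1) by blast
  ultimately show ?case
    using \<phi>(2) b(2) insert.hyps(2) by auto
qed

lemma bij_betw_glue_partitions:
  assumes A: "partition_on A P" and B: "partition_on B Q" and \<phi>: "bij_betw \<phi> P Q"
    and H: "\<And>C. C \<in> P \<Longrightarrow> bij_betw (H C) C (\<phi> C)"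
    and g: "\<And>C x. C \<in> P \<Longrightarrow> x \<in> C \<Longrightarrow> g x = H C x"
  shows "bij_betw g A B"
proof -
  have "bij_betw g (\<Union>C\<in>P. C) (\<Union>C\<in>P. \<phi> C)"
  proof (rule bij_betw_UNION_disjoint)
    have "disjoint (\<phi> ` P)"
      using B \<phi> by (simp add: bij_betw_def partition_on_def)
    then show "disjoint_family_on \<phi> P"
      using \<phi> by (simp add: bij_betw_def disjoint_image_disjoint_family_on)
    show "bij_betw g C (\<phi> C)" if "C \<in> P" for C
      using H[OF that] g[OF that] bij_betw_cong[of C g "H C" "\<phi> C"] by simp
  qed
  then show ?thesis
    using A B \<phi> by (simp add: partition_on_def bij_betw_def)
qed

lemma eq_conjugate_iff_commute:
  assumes "g permutes S"
  shows "t = g \<circ> s \<circ> inv g \<longleftrightarrow> g \<circ> s = t \<circ> g"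
proof
  assume "t = g \<circ> s \<circ> inv g"
  then show "g \<circ> s = t \<circ> g"
    by (simp add: fun_eq_iff permutes_inverses[OF assms])
next
  assume "g \<circ> s = t \<circ> g"
  then have "g (s (inv g y)) = t y" for y
    by (metis comp_apply permutes_inverses(1)[OF assms])
  then show "t = g \<circ> s \<circ> inv g"
    by (simp add: fun_eq_iff)
qed

section \<open>Orbits of a pair of maps\<close>

lemma dih_orbit_subsetI:
  assumes "x \<in> A" and "\<And>y. y \<in> A \<Longrightarrow> s1 y \<in> A" and "\<And>y. y \<in> A \<Longrightarrow> s2 y \<in> A"
  shows "dih_orbit s1 s2 x \<subseteq> A"
proof
  fix y
  assume "y \<in> dih_orbit s1 s2 x"
  then have "(x, y) \<in> (dih_step s1 s2)\<^sup>*"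
    by (simp add: dih_orbit_def)
  then show "y \<in> A"
    by (induction rule: rtrancl_induct) (auto simp: dih_step_def assms)
qed

lemma dih_orbit_refl [simp]: "x \<in> dih_orbit s1 s2 x"
  by (simp add: dih_orbit_def)

lemma dih_orbit_s1: "y \<in> dih_orbit s1 s2 x \<Longrightarrow> s1 y \<in> dih_orbit s1 s2 x"
  and dih_orbit_s2: "y \<in> dih_orbit s1 s2 x \<Longrightarrow> s2 y \<in> dih_orbit s1 s2 x"
  unfolding dih_orbit_def dih_step_def by (auto intro: rtrancl_into_rtrancl)

lemma dih_orbit_trans: "y \<in> dih_orbit s1 s2 x \<Longrightarrow> dih_orbit s1 s2 y \<subseteq> dih_orbit s1 s2 x"
  by (rule dih_orbit_subsetI) (auto intro: dih_orbit_s1 dih_orbit_s2)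

lemma dih_orbit_swap: "dih_orbit s2 s1 = dih_orbit s1 s2"
  unfolding dih_orbit_def dih_step_def by (simp add: Un_commute)

lemma dih_orbit_equivariant_image:
  assumes "\<And>y. h (s1 y) = t1 (h y)" and "\<And>y. h (s2 y) = t2 (h y)"
  shows "dih_orbit t1 t2 (h x) = h ` dih_orbit s1 s2 x"
proof
  show "dih_orbit t1 t2 (h x) \<subseteq> h ` dih_orbit s1 s2 x"
    by (rule dih_orbit_subsetI) (auto simp flip: assms intro: dih_orbit_s1 dih_orbit_s2)
  have "dih_orbit s1 s2 x \<subseteq> {y. h y \<in> dih_orbit t1 t2 (h x)}"
    by (rule dih_orbit_subsetI) (auto simp: assms intro: dih_orbit_s1 dih_orbit_s2)
  then show "h ` dih_orbit s1 s2 x \<subseteq> dih_orbit t1 t2 (h x)"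
    by blast
qed

lemma num_fixed_image:
  assumes "inj g" and "\<And>y. g (s y) = t (g y)"
  shows "num_fixed t (g ` C) = num_fixed s C"
proof -
  have "{z \<in> g ` C. t z = z} = g ` {y \<in> C. s y = y}"
    using assms by (auto simp flip: assms(2) simp: inj_eq)
  then show ?thesis
    using assms(1) by (simp add: num_fixed_def card_image inj_on_subset)
qed

lemma dihedral_decomp_eq_if_commuting_permutation:
  assumes g: "g permutes {1..n}" and "g \<circ> s1 = t1 \<circ> g" and "g \<circ> s2 = t2 \<circ> g"
  shows "dihedral_decomp n s1 s2 = dihedral_decomp n t1 t2"
proof
  fix t
  have inj: "inj g"
    using g by (rule permutes_inj)
  have commute: "\<And>y. g (s1 y) = t1 (g y)" "\<And>y. g (s2 y) = t2 (g y)"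
    using assms(2,3) by (metis comp_apply)+
  have "dih_orbits n t1 t2 = dih_orbit t1 t2 ` g ` {1..n}"
    unfolding dih_orbits_def permutes_image[OF g] ..
  also have "\<dots> = image g ` dih_orbits n s1 s2"
    by (simp add: dih_orbits_def image_image dih_orbit_equivariant_image[of g s1 t1 s2 t2, OF commute])
  finally have orbits: "dih_orbits n t1 t2 = image g ` dih_orbits n s1 s2" .
  have types: "orbit_type t1 t2 (g ` C) = orbit_type s1 s2 C" for C
    unfolding orbit_type_def num_fixed_image[of g s1 t1, OF inj commute(1)]
      num_fixed_image[of g s2 t2, OF inj commute(2)] ..
  have "{C \<in> dih_orbits n t1 t2. orbit_type t1 t2 C = t} =
      image g ` {C \<in> dih_orbits n s1 s2. orbit_type s1 s2 C = t}"
    unfolding orbits by (auto simp: types)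
  moreover have "image_mset card (mset_set (image g ` A)) = image_mset card (mset_set A)" for A
  proof -
    have "inj_on (image g) A"
      using inj by (simp add: inj_on_def inj_image_eq_iff)
    then have "mset_set (image g ` A) = image_mset (image g) (mset_set A)"
      by (simp add: image_mset_mset_set)
    then show ?thesis
      using inj by (simp add: multiset.map_comp comp_def card_image inj_on_subset)
  qed
  ultimately show "dihedral_decomp n s1 s2 t = dihedral_decomp n t1 t2 t"
    by (simp add: dihedral_decomp_def)
qed

section \<open>Rotations and the parametrisation of an orbit\<close>

text \<open>For involutions, \<open>s1 \<circ> s2\<close> is the inverse of the rotation \<open>s2 \<circ> s1\<close>, so \<open>rot_pow s1 s2 j\<close>
  is its \<open>j\<close>-th power for every integer \<open>j\<close>.\<close>

definition rot_pow :: "('a \<Rightarrow> 'a) \<Rightarrow> ('a \<Rightarrow> 'a) \<Rightarrow> int \<Rightarrow> 'a \<Rightarrow> 'a" where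
  "rot_pow s1 s2 j = (if 0 \<le> j then (s2 \<circ> s1) ^^ nat j else (s1 \<circ> s2) ^^ nat (- j))"

text \<open>The pair \<open>(j, b)\<close> stands for the element \<open>\<rho>\<^sup>j s1\<^sup>b\<close> of the infinite dihedral group.\<close>

definition dih_param :: "('a \<Rightarrow> 'a) \<Rightarrow> ('a \<Rightarrow> 'a) \<Rightarrow> 'a \<Rightarrow> int \<times> bool \<Rightarrow> 'a" where
  "dih_param s1 s2 x = (\<lambda>(j, b). rot_pow s1 s2 j (if b then s1 x else x))"

locale involution_pair =
  fixes s1 s2 :: "'a \<Rightarrow> 'a"
  assumes s1_s1 [simp]: "s1 (s1 x) = x" and s2_s2 [simp]: "s2 (s2 x) = x"
begin

lemma rot_pow_0 [simp]: "rot_pow s1 s2 0 x = x"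
  by (simp add: rot_pow_def)

lemma rot_pow_plus_1: "rot_pow s1 s2 (j + 1) x = s2 (s1 (rot_pow s1 s2 j x))"
proof -
  consider "0 \<le> j" | "j = -1" | "j < -1" by linarith
  then show ?thesis
  proof cases
    case 1
    then have "nat (j + 1) = Suc (nat j)" by simp
    with 1 show ?thesis by (simp add: rot_pow_def)
  next
    case 2
    then show ?thesis by (simp add: rot_pow_def)
  next
    case 3
    then have "nat (- j) = Suc (nat (- (j + 1)))" by simp
    with 3 show ?thesis by (simp add: rot_pow_def)
  qed
qed

lemma rot_pow_minus_1: "rot_pow s1 s2 (j - 1) x = s1 (s2 (rot_pow s1 s2 j x))"
  using rot_pow_plus_1[of "j - 1" x] by simp

lemma rot_pow_add: "rot_pow s1 s2 (i + j) x = rot_pow s1 s2 i (rot_pow s1 s2 j x)"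
proof (induction i rule: int_induct[where k = 0])
  case (step1 i)
  have "rot_pow s1 s2 (i + 1 + j) x = rot_pow s1 s2 (i + j + 1) x"
    by (simp add: ac_simps)
  with step1 show ?case by (simp add: rot_pow_plus_1)
next
  case (step2 i)
  have "rot_pow s1 s2 (i - 1 + j) x = rot_pow s1 s2 (i + j - 1) x"
    by (simp add: algebra_simps)
  with step2 show ?case by (simp add: rot_pow_minus_1)
qed simp

lemma rot_pow_neg_cancel [simp]: "rot_pow s1 s2 (- j) (rot_pow s1 s2 j x) = x"
  by (simp flip: rot_pow_add)

lemma s1_rot_pow: "s1 (rot_pow s1 s2 j x) = rot_pow s1 s2 (- j) (s1 x)"
proof (induction j rule: int_induct[where k = 0])
  case (step1 j)
  have "s1 (rot_pow s1 s2 (j + 1) x) = s1 (s2 (rot_pow s1 s2 (- j) (s1 x)))"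
    by (simp add: rot_pow_plus_1 step1(2))
  also have "\<dots> = rot_pow s1 s2 (- j - 1) (s1 x)"
    by (simp add: rot_pow_minus_1)
  finally show ?case by simp
next
  case (step2 j)
  have "rot_pow s1 s2 (- (j - 1)) (s1 x) = s2 (s1 (rot_pow s1 s2 (- j) (s1 x)))"
    using rot_pow_plus_1[of "- j"] by simp
  also have "\<dots> = s2 (rot_pow s1 s2 j x)"
    by (simp flip: step2(2))
  finally show ?case by (simp add: rot_pow_minus_1)
qed simp

lemma s2_rot_pow: "s2 (rot_pow s1 s2 j x) = rot_pow s1 s2 (1 - j) (s1 x)"
proof -
  have "rot_pow s1 s2 (- j + 1) (s1 x) = s2 (s1 (rot_pow s1 s2 (- j) (s1 x)))"
    by (rule rot_pow_plus_1)
  then show ?thesis by (simp flip: s1_rot_pow)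
qed

lemma dih_param_0 [simp]: "dih_param s1 s2 x (0, False) = x"
  by (simp add: dih_param_def)

lemma dih_param_s1: "s1 (dih_param s1 s2 x (j, b)) = dih_param s1 s2 x (- j, \<not> b)"
  by (simp add: dih_param_def s1_rot_pow)

lemma dih_param_s2: "s2 (dih_param s1 s2 x (j, b)) = dih_param s1 s2 x (1 - j, \<not> b)"
  by (simp add: dih_param_def s2_rot_pow)

lemma rot_pow_dih_param: "rot_pow s1 s2 i (dih_param s1 s2 x (j, b)) = dih_param s1 s2 x (i + j, b)"
  by (simp add: dih_param_def rot_pow_add)

text \<open>A reflection \<open>\<rho>\<^sup>k s1\<close> of the orbit fixing \<open>x\<close> is conjugate to \<open>s1\<close> or to \<open>s2\<close> by
  a rotation, according to the parity of \<open>k\<close>.\<close>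

lemma reflection_fixed_point:
  assumes "dih_param s1 s2 x (k, True) = x"
  shows "\<exists>e. s1 (dih_param s1 s2 x e) = dih_param s1 s2 x e \<or>
    s2 (dih_param s1 s2 x e) = dih_param s1 s2 x e"
proof -
  define a where "a = k div 2"
  let ?y = "dih_param s1 s2 x (- a, False)"
  have shift: "rot_pow s1 s2 (- a) (dih_param s1 s2 x (k, True)) = ?y"
    using assms by (simp add: dih_param_def)
  show ?thesis
  proof (cases "even k")
    case True
    then have "k - a = a"
      by (simp add: a_def)
    then have "s1 ?y = ?y"
      using shift by (simp add: dih_param_s1 rot_pow_dih_param)
    then show ?thesis by blast
  next
    case False
    then have "k - a = a + 1"
      by (simp add: a_def)
    then have "s2 ?y = ?y"
      using shift by (simp add: dih_param_s2 rot_pow_dih_param add.commute)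
    then show ?thesis by blast
  qed
qed

end

section \<open>Orbits of a pair of involutions in \<open>S\<^sub>n\<close>\<close>

text \<open>At a base point \<open>x\<close> the coincidences among the points \<open>\<rho>\<^sup>j x\<close> and \<open>\<rho>\<^sup>j (s1 x)\<close> depend only
  on the period of \<open>\<rho>\<close> at \<open>x\<close> and on whether \<open>s1\<close> fixes \<open>x\<close>; every orbit contains a base point of
  the pair or of the swapped pair.\<close>

definition dih_base_point :: "(nat \<Rightarrow> nat) \<Rightarrow> (nat \<Rightarrow> nat) \<Rightarrow> nat \<Rightarrow> bool" where
  "dih_base_point s1 s2 x \<longleftrightarrow> s1 x = x \<or> (\<forall>y\<in>dih_orbit s1 s2 x. s1 y \<noteq> y \<and> s2 y \<noteq> y)"

locale involution_pair_Sn =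
  fixes n :: nat and s1 s2 :: "nat \<Rightarrow> nat"
  assumes involution_s1: "involution_Sn n s1" and involution_s2: "involution_Sn n s2"

lemma involution_pair_Sn_swap: "involution_pair_Sn n s1 s2 \<Longrightarrow> involution_pair_Sn n s2 s1"
  by (simp add: involution_pair_Sn_def)

context involution_pair_Sn
begin

lemma s1_permutes: "s1 permutes {1..n}" and s2_permutes: "s2 permutes {1..n}"
  using involution_s1 involution_s2 by (simp_all add: involution_Sn_def)

sublocale involution_pair s1 s2
  using involution_s1 involution_s2
  by unfold_locales (simp_all add: involution_Sn_def pointfree_idE)

abbreviation rot_period :: "nat \<Rightarrow> nat" where
  "rot_period x \<equiv> least_power (s2 \<circ> s1) x"

lemma permutation_rot: "permutation (s2 \<circ> s1)"
  using s1_permutes s2_permutes by (meson finite_atLeastAtMost permutation_compose permutation_permutes)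

lemma rot_period_pos: "0 < rot_period x"
  by (rule least_power_of_permutation(2)[OF permutation_rot])

lemma rot_pow_eq_self_iff: "rot_pow s1 s2 j x = x \<longleftrightarrow> int (rot_period x) dvd j"
proof -
  have nonneg: "rot_pow s1 s2 (int k) x = x \<longleftrightarrow> int (rot_period x) dvd int k" for k
    using least_power_dvd[OF permutation_rot] by (simp add: rot_pow_def)
  have neg: "rot_pow s1 s2 (- j) x = x \<longleftrightarrow> rot_pow s1 s2 j x = x" for j
    by (metis rot_pow_neg_cancel minus_minus)
  show ?thesis
  proof (cases "0 \<le> j")
    case True
    then show ?thesis using nonneg[of "nat j"] by simp
  next
    case False
    then show ?thesis using nonneg[of "nat (- j)"] neg[of j] by simp
  qed
qed

lemma rot_pow_eq_iff: "rot_pow s1 s2 i x = rot_pow s1 s2 j x \<longleftrightarrow> int (rot_period x) dvd i - j"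
proof -
  have "rot_pow s1 s2 i x = rot_pow s1 s2 j x \<longleftrightarrow> rot_pow s1 s2 (- j) (rot_pow s1 s2 i x) = x"
    by (metis rot_pow_neg_cancel minus_minus)
  also have "\<dots> \<longleftrightarrow> int (rot_period x) dvd i - j"
    by (simp add: rot_pow_eq_self_iff flip: rot_pow_add)
  finally show ?thesis .
qed

lemma dih_param_eq_same_iff:
  "dih_param s1 s2 x (i, b) = dih_param s1 s2 x (j, b) \<longleftrightarrow> int (rot_period x) dvd i - j"
proof (cases b)
  case True
  have "rot_pow s1 s2 i (s1 x) = rot_pow s1 s2 j (s1 x) \<longleftrightarrow>
      s1 (rot_pow s1 s2 i (s1 x)) = s1 (rot_pow s1 s2 j (s1 x))"
    by (metis s1_s1)
  also have "\<dots> \<longleftrightarrow> int (rot_period x) dvd i - j"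
    by (simp add: s1_rot_pow rot_pow_eq_iff dvd_diff_commute)
  finally show ?thesis
    using True by (simp add: dih_param_def)
qed (simp add: dih_param_def rot_pow_eq_iff)

lemma dih_orbit_rot_pow: "y \<in> dih_orbit s1 s2 x \<Longrightarrow> rot_pow s1 s2 j y \<in> dih_orbit s1 s2 x"
proof (induction j rule: int_induct[where k = 0])
  case (step1 i)
  then show ?case by (simp add: rot_pow_plus_1 dih_orbit_s1 dih_orbit_s2)
next
  case (step2 i)
  then show ?case by (simp add: rot_pow_minus_1 dih_orbit_s1 dih_orbit_s2)
qed simp

lemma range_dih_param: "range (dih_param s1 s2 x) = dih_orbit s1 s2 x"
proof
  show "range (dih_param s1 s2 x) \<subseteq> dih_orbit s1 s2 x"
    unfolding dih_param_def by (auto intro!: dih_orbit_rot_pow dih_orbit_s1)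
  have "dih_param s1 s2 x (0, False) \<in> range (dih_param s1 s2 x)"
    by blast
  then show "dih_orbit s1 s2 x \<subseteq> range (dih_param s1 s2 x)"
    by (intro dih_orbit_subsetI) (auto simp: dih_param_s1 dih_param_s2)
qed

lemma dih_orbit_eq: "y \<in> dih_orbit s1 s2 x \<Longrightarrow> dih_orbit s1 s2 y = dih_orbit s1 s2 x"
proof
  assume y: "y \<in> dih_orbit s1 s2 x"
  then show "dih_orbit s1 s2 y \<subseteq> dih_orbit s1 s2 x"
    by (rule dih_orbit_trans)
  have "sym (dih_step s1 s2)"
    by (auto simp: sym_def dih_step_def intro: exI[of _ "s1 _"] exI[of _ "s2 _"])
  then have "sym ((dih_step s1 s2)\<^sup>*)"
    by (rule sym_rtrancl)
  then have "x \<in> dih_orbit s1 s2 y"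
    using y by (simp add: dih_orbit_def symD)
  then show "dih_orbit s1 s2 x \<subseteq> dih_orbit s1 s2 y"
    by (rule dih_orbit_trans)
qed

lemma dih_param_eq_iff:
  assumes base: "dih_base_point s1 s2 x"
  shows "dih_param s1 s2 x (i, a) = dih_param s1 s2 x (j, b) \<longleftrightarrow>
    int (rot_period x) dvd i - j \<and> (a = b \<or> s1 x = x)"
proof (cases "a = b")
  case True
  then show ?thesis by (simp add: dih_param_eq_same_iff)
next
  case False
  show ?thesis
  proof (cases "s1 x = x")
    case True
    then show ?thesis by (simp add: dih_param_def rot_pow_eq_iff)
  next
    case no_fixed_base: False
    have "dih_param s1 s2 x (i, False) \<noteq> dih_param s1 s2 x (j, True)" for i j
    proof
      assume "dih_param s1 s2 x (i, False) = dih_param s1 s2 x (j, True)"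
      then have "rot_pow s1 s2 (- i) (dih_param s1 s2 x (i, False)) =
          rot_pow s1 s2 (- i) (dih_param s1 s2 x (j, True))"
        by simp
      then have "dih_param s1 s2 x (j - i, True) = x"
        by (simp add: rot_pow_dih_param)
      then obtain e where "s1 (dih_param s1 s2 x e) = dih_param s1 s2 x e \<or>
          s2 (dih_param s1 s2 x e) = dih_param s1 s2 x e"
        using reflection_fixed_point by blast
      moreover have "dih_param s1 s2 x e \<in> dih_orbit s1 s2 x"
        by (simp flip: range_dih_param)
      ultimately show False
        using base no_fixed_base by (auto simp: dih_base_point_def)
    qed
    then show ?thesis
      using False no_fixed_base by (cases a) (auto simp: eq_commute[of "dih_param s1 s2 x (i, True)"])
  qed
qed

lemma card_dih_orbit:
  assumes base: "dih_base_point s1 s2 x"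
  shows "card (dih_orbit s1 s2 x) = (if s1 x = x then rot_period x else 2 * rot_period x)"
proof -
  let ?r = "int (rot_period x)"
  define B where "B = (if s1 x = x then {False} else UNIV)"
  note kernel = dih_param_eq_iff[OF base]
  have "dih_param s1 s2 x (j, b) \<in> dih_param s1 s2 x ` ({0..<?r} \<times> B)" for j b
  proof
    show "dih_param s1 s2 x (j, b) = dih_param s1 s2 x (j mod ?r, b \<and> s1 x \<noteq> x)"
      by (simp add: kernel flip: mod_eq_dvd_iff) blast
    show "(j mod ?r, b \<and> s1 x \<noteq> x) \<in> {0..<?r} \<times> B"
      using rot_period_pos[of x] by (simp add: B_def)
  qed
  then have "dih_orbit s1 s2 x = dih_param s1 s2 x ` ({0..<?r} \<times> B)"
    by (auto simp flip: range_dih_param)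
  moreover have "inj_on (dih_param s1 s2 x) ({0..<?r} \<times> B)"
  proof (rule inj_onI)
    fix e e'
    assume "e \<in> {0..<?r} \<times> B" "e' \<in> {0..<?r} \<times> B" "dih_param s1 s2 x e = dih_param s1 s2 x e'"
    moreover obtain i a j b where e: "e = (i, a)" "e' = (j, b)"
      by fastforce
    ultimately have bounds: "0 \<le> i" "i < ?r" "0 \<le> j" "j < ?r"
      and dvd: "?r dvd i - j" and "a = b"
      by (auto simp: kernel B_def split: if_splits)
    from dvd have "i mod ?r = j mod ?r"
      by (simp add: mod_eq_dvd_iff)
    then show "e = e'"
      using bounds e \<open>a = b\<close> by simp
  qed
  ultimately show ?thesis
    by (simp add: card_image card_cartesian_product B_def)
qed

lemma num_fixed_dih_orbit_if_s1_fixed: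
  assumes "s1 x = x"
  shows "num_fixed s1 (dih_orbit s1 s2 x) = (if odd (card (dih_orbit s1 s2 x)) then 1 else 2)"
    and "num_fixed s2 (dih_orbit s1 s2 x) = (if odd (card (dih_orbit s1 s2 x)) then 1 else 0)"
proof -
  let ?p = "\<lambda>j. rot_pow s1 s2 j x" and ?r = "rot_period x"
  have card: "card (dih_orbit s1 s2 x) = ?r"
    using card_dih_orbit assms by (simp add: dih_base_point_def)
  have orbit: "dih_orbit s1 s2 x = range ?p"
    using assms unfolding range_dih_param[symmetric] dih_param_def
    by (auto intro!: rev_image_eqI[of "(_, False)"])
  note count = card_fixed_points_reflection[of ?r ?p, OF rot_period_pos rot_pow_eq_iff]
  have reflection_s1: "s1 (?p j) = ?p (0 - j)" and reflection_s2: "s2 (?p j) = ?p (1 - j)" for j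
    using assms by (simp_all add: s1_rot_pow s2_rot_pow)
  show "num_fixed s1 (dih_orbit s1 s2 x) = (if odd (card (dih_orbit s1 s2 x)) then 1 else 2)"
    and "num_fixed s2 (dih_orbit s1 s2 x) = (if odd (card (dih_orbit s1 s2 x)) then 1 else 0)"
    unfolding card unfolding num_fixed_def orbit
    using count[OF reflection_s1] count[OF reflection_s2] by simp_all
qed

lemma orbit_type_dih_orbit:
  "orbit_type s1 s2 (dih_orbit s1 s2 x) =
    (if \<exists>y\<in>dih_orbit s1 s2 x. s1 y = y then if odd (card (dih_orbit s1 s2 x)) then 2 else 3
     else if \<exists>y\<in>dih_orbit s1 s2 x. s2 y = y then 4 else 1)"
proof -
  interpret swapped: involution_pair_Sn n s2 s1
    by (rule involution_pair_Sn_swap) unfold_locales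
  consider (s1_fixed) y where "y \<in> dih_orbit s1 s2 x" "s1 y = y"
    | (s2_fixed) y where "y \<in> dih_orbit s1 s2 x" "s2 y = y" "\<forall>z\<in>dih_orbit s1 s2 x. s1 z \<noteq> z"
    | (free) "\<forall>y\<in>dih_orbit s1 s2 x. s1 y \<noteq> y \<and> s2 y \<noteq> y"
    by blast
  then show ?thesis
  proof cases
    case s1_fixed
    then have "dih_orbit s1 s2 y = dih_orbit s1 s2 x"
      by (simp add: dih_orbit_eq)
    then show ?thesis
      using s1_fixed num_fixed_dih_orbit_if_s1_fixed[of y] by (auto simp: orbit_type_def)
  next
    case s2_fixed
    then have orbit: "dih_orbit s2 s1 y = dih_orbit s1 s2 x"
      by (simp add: dih_orbit_eq dih_orbit_swap)
    have "num_fixed s1 (dih_orbit s1 s2 x) = 0"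
      using s2_fixed by (auto simp: num_fixed_def card_eq_0_iff)
    \<comment> \<open>so the orbit has even size: for odd size \<open>s1\<close> would have a fixed point\<close>
    then show ?thesis
      using s2_fixed swapped.num_fixed_dih_orbit_if_s1_fixed[of y] unfolding orbit
      by (auto simp: orbit_type_def split: if_splits)
  next
    case free
    then have "num_fixed s1 (dih_orbit s1 s2 x) = 0" "num_fixed s2 (dih_orbit s1 s2 x) = 0"
      by (auto simp: num_fixed_def card_eq_0_iff)
    then show ?thesis
      using free by (auto simp: orbit_type_def)
  qed
qed

lemma orbit_type_dih_orbit_in: "orbit_type s1 s2 (dih_orbit s1 s2 x) \<in> {1..4}"
  by (simp add: orbit_type_dih_orbit)

lemma dih_orbits_UN_orbit_type:
  "dih_orbits n s1 s2 = (\<Union>t\<in>{1..4}. {C \<in> dih_orbits n s1 s2. orbit_type s1 s2 C = t})"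
  using orbit_type_dih_orbit_in by (auto simp: dih_orbits_def)

lemma dih_orbit_subset: "x \<in> {1..n} \<Longrightarrow> dih_orbit s1 s2 x \<subseteq> {1..n}"
  by (rule dih_orbit_subsetI) (simp_all only: permutes_in_image[OF s1_permutes] permutes_in_image[OF s2_permutes])

lemma dih_orbit_eq_if_mem_dih_orbits: "C \<in> dih_orbits n s1 s2 \<Longrightarrow> y \<in> C \<Longrightarrow> dih_orbit s1 s2 y = C"
  by (auto simp: dih_orbits_def dih_orbit_eq)

lemma partition_on_dih_orbits: "partition_on {1..n} (dih_orbits n s1 s2)"
proof (rule partition_onI)
  show "\<Union> (dih_orbits n s1 s2) = {1..n}"
    using dih_orbit_subset by (fastforce simp: dih_orbits_def)
  show "disjnt C C'" if "C \<in> dih_orbits n s1 s2" "C' \<in> dih_orbits n s1 s2" "C \<noteq> C'" for C C'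
    using that dih_orbit_eq_if_mem_dih_orbits by (metis disjnt_iff)
  show "{} \<notin> dih_orbits n s1 s2"
    unfolding dih_orbits_def by (metis dih_orbit_refl empty_iff imageE)
qed

end

section \<open>Isomorphic orbits and conjugacy\<close>

definition dih_iso_betw ::
    "('a \<Rightarrow> 'a) \<Rightarrow> ('a \<Rightarrow> 'a) \<Rightarrow> ('b \<Rightarrow> 'b) \<Rightarrow> ('b \<Rightarrow> 'b) \<Rightarrow> ('a \<Rightarrow> 'b) \<Rightarrow> 'a set \<Rightarrow> 'b set \<Rightarrow> bool" where
  "dih_iso_betw s1 s2 t1 t2 h A B \<longleftrightarrow>
    bij_betw h A B \<and> (\<forall>y\<in>A. h (s1 y) = t1 (h y) \<and> h (s2 y) = t2 (h y))"

lemma dih_iso_betw_swap: "dih_iso_betw s2 s1 t2 t1 h A B \<longleftrightarrow> dih_iso_betw s1 s2 t1 t2 h A B"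
  by (auto simp: dih_iso_betw_def)

lemma dih_iso_betw_orbits_at_base_points:
  assumes S: "involution_pair_Sn n s1 s2" and T: "involution_pair_Sn m t1 t2"
    and base_s: "dih_base_point s1 s2 x" and base_t: "dih_base_point t1 t2 x'"
    and fixed: "s1 x = x \<longleftrightarrow> t1 x' = x'"
    and card: "card (dih_orbit s1 s2 x) = card (dih_orbit t1 t2 x')"
  shows "\<exists>h. dih_iso_betw s1 s2 t1 t2 h (dih_orbit s1 s2 x) (dih_orbit t1 t2 x')"
proof -
  interpret S: involution_pair_Sn n s1 s2 by (rule S)
  interpret T: involution_pair_Sn m t1 t2 by (rule T)
  have "S.rot_period x = T.rot_period x'"
    using card fixed S.card_dih_orbit[OF base_s] T.card_dih_orbit[OF base_t] by (auto split: if_splits)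
  then have "dih_param s1 s2 x e = dih_param s1 s2 x e' \<longleftrightarrow> dih_param t1 t2 x' e = dih_param t1 t2 x' e'" for e e'
    using S.dih_param_eq_iff[OF base_s] T.dih_param_eq_iff[OF base_t] fixed by (cases e; cases e') simp
  then obtain h where bij: "bij_betw h (range (dih_param s1 s2 x)) (range (dih_param t1 t2 x'))"
    and h: "\<And>e. h (dih_param s1 s2 x e) = dih_param t1 t2 x' e"
    using bij_betw_range_if_same_kernel[of "dih_param s1 s2 x" "dih_param t1 t2 x'"] by blast
  have "h (s1 y) = t1 (h y) \<and> h (s2 y) = t2 (h y)" if "y \<in> range (dih_param s1 s2 x)" for y
    using that by (auto simp: h S.dih_param_s1 T.dih_param_s1 S.dih_param_s2 T.dih_param_s2)
  with bij show ?thesis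
    unfolding dih_iso_betw_def S.range_dih_param T.range_dih_param by blast
qed

lemma dih_iso_betw_orbits_if_type_card_eq:
  assumes S: "involution_pair_Sn n s1 s2" and T: "involution_pair_Sn m t1 t2"
    and type: "orbit_type s1 s2 (dih_orbit s1 s2 x) = orbit_type t1 t2 (dih_orbit t1 t2 x')"
    and card: "card (dih_orbit s1 s2 x) = card (dih_orbit t1 t2 x')"
  shows "\<exists>h. dih_iso_betw s1 s2 t1 t2 h (dih_orbit s1 s2 x) (dih_orbit t1 t2 x')"
proof -
  interpret S: involution_pair_Sn n s1 s2 by (rule S)
  interpret T: involution_pair_Sn m t1 t2 by (rule T)
  consider (s1_fixed) y y' where "y \<in> dih_orbit s1 s2 x" "s1 y = y" "y' \<in> dih_orbit t1 t2 x'" "t1 y' = y'"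
    | (s2_fixed) y y' where "y \<in> dih_orbit s1 s2 x" "s2 y = y" "y' \<in> dih_orbit t1 t2 x'" "t2 y' = y'"
    | (free) "\<forall>y\<in>dih_orbit s1 s2 x. s1 y \<noteq> y \<and> s2 y \<noteq> y"
        "\<forall>y\<in>dih_orbit t1 t2 x'. t1 y \<noteq> y \<and> t2 y \<noteq> y"
    using type unfolding S.orbit_type_dih_orbit T.orbit_type_dih_orbit by (auto split: if_splits)
  then show ?thesis
  proof cases
    case s1_fixed
    then have "dih_orbit s1 s2 y = dih_orbit s1 s2 x" "dih_orbit t1 t2 y' = dih_orbit t1 t2 x'"
      by (simp_all add: S.dih_orbit_eq T.dih_orbit_eq)
    then show ?thesis
      using dih_iso_betw_orbits_at_base_points[OF S T, of y y'] s1_fixed card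
      by (simp add: dih_base_point_def)
  next
    case s2_fixed
    then have "dih_orbit s2 s1 y = dih_orbit s1 s2 x" "dih_orbit t2 t1 y' = dih_orbit t1 t2 x'"
      by (simp_all add: S.dih_orbit_eq T.dih_orbit_eq dih_orbit_swap)
    then show ?thesis
      using dih_iso_betw_orbits_at_base_points[OF involution_pair_Sn_swap[OF S] involution_pair_Sn_swap[OF T], of y y']
        s2_fixed card by (simp add: dih_iso_betw_swap dih_base_point_def)
  next
    case free
    then show ?thesis
      using dih_iso_betw_orbits_at_base_points[OF S T, of x x'] card by (simp add: dih_base_point_def)
  qed
qed

lemma bij_betw_dih_orbits_of_type:
  assumes "dihedral_decomp n s1 s2 = dihedral_decomp n t1 t2" and "t \<in> {1..4}"
  shows "\<exists>\<Phi>. bij_betw \<Phi> {C \<in> dih_orbits n s1 s2. orbit_type s1 s2 C = t}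
      {C \<in> dih_orbits n t1 t2. orbit_type t1 t2 C = t} \<and>
    (\<forall>C\<in>{C \<in> dih_orbits n s1 s2. orbit_type s1 s2 C = t}. card (\<Phi> C) = card C)"
proof (rule bij_betw_if_image_mset_eq)
  show "finite {C \<in> dih_orbits n s1 s2. orbit_type s1 s2 C = t}"
    and "finite {C \<in> dih_orbits n t1 t2. orbit_type t1 t2 C = t}"
    by (simp_all add: dih_orbits_def)
  show "image_mset card (mset_set {C \<in> dih_orbits n s1 s2. orbit_type s1 s2 C = t}) =
      image_mset card (mset_set {C \<in> dih_orbits n t1 t2. orbit_type t1 t2 C = t})"
    using fun_cong[OF assms(1), of t] assms(2) by (simp add: dihedral_decomp_def)
qed

lemma bij_betw_dih_orbits_preserving_type_card:
  assumes S: "involution_pair_Sn n s1 s2" and T: "involution_pair_Sn n t1 t2"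
    and decomp: "dihedral_decomp n s1 s2 = dihedral_decomp n t1 t2"
  obtains \<phi> where "bij_betw \<phi> (dih_orbits n s1 s2) (dih_orbits n t1 t2)"
    and "\<And>C. C \<in> dih_orbits n s1 s2 \<Longrightarrow>
      orbit_type t1 t2 (\<phi> C) = orbit_type s1 s2 C \<and> card (\<phi> C) = card C"
proof -
  define X where "X t = {C \<in> dih_orbits n s1 s2. orbit_type s1 s2 C = t}" for t
  define Y where "Y t = {C \<in> dih_orbits n t1 t2. orbit_type t1 t2 C = t}" for t
  have "\<forall>t\<in>{1..4}. \<exists>\<Phi>. bij_betw \<Phi> (X t) (Y t) \<and> (\<forall>C\<in>X t. card (\<Phi> C) = card C)"
    unfolding X_def Y_def using bij_betw_dih_orbits_of_type[OF decomp] by blast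
  from bchoice[OF this] obtain \<Phi> where
    \<Phi>: "\<And>t. t \<in> {1..4} \<Longrightarrow> bij_betw (\<Phi> t) (X t) (Y t) \<and> (\<forall>C\<in>X t. card (\<Phi> t C) = card C)"
    by blast
  define \<phi> where "\<phi> C = \<Phi> (orbit_type s1 s2 C) C" for C
  have orbits: "dih_orbits n s1 s2 = (\<Union>t\<in>{1..4}. X t)" "dih_orbits n t1 t2 = (\<Union>t\<in>{1..4}. Y t)"
    unfolding X_def Y_def
    by (rule involution_pair_Sn.dih_orbits_UN_orbit_type[OF S] involution_pair_Sn.dih_orbits_UN_orbit_type[OF T])+
  have "bij_betw \<phi> (dih_orbits n s1 s2) (dih_orbits n t1 t2)"
    unfolding orbits
  proof (rule bij_betw_UNION_disjoint)
    show "disjoint_family_on Y {1..4}"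
      by (auto simp: disjoint_family_on_def Y_def)
    show "bij_betw \<phi> (X t) (Y t)" if "t \<in> {1..4}" for t
    proof -
      have "\<Phi> t C = \<phi> C" if "C \<in> X t" for C
        using that by (simp add: \<phi>_def X_def)
      then show ?thesis
        using \<Phi>[OF that] bij_betw_cong[of "X t" "\<Phi> t" \<phi> "Y t"] by blast
    qed
  qed
  moreover have "orbit_type t1 t2 (\<phi> C) = orbit_type s1 s2 C \<and> card (\<phi> C) = card C"
    if C_orbit: "C \<in> dih_orbits n s1 s2" for C
  proof -
    obtain t where t: "t \<in> {1..4}" and C: "C \<in> X t"
      using C_orbit unfolding orbits(1) by blast
    then have "\<phi> C = \<Phi> t C" "orbit_type s1 s2 C = t"
      by (simp_all add: \<phi>_def X_def)
    moreover have "\<Phi> t C \<in> Y t" "card (\<Phi> t C) = card C"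
      using \<Phi>[OF t] C by (auto dest: bij_betw_apply)
    ultimately show ?thesis
      by (simp add: Y_def)
  qed
  ultimately show ?thesis
    using that by blast
qed

lemma commuting_permutation_if_orbit_isos:
  assumes S: "involution_pair_Sn n s1 s2" and T: "involution_pair_Sn n t1 t2"
    and \<phi>: "bij_betw \<phi> (dih_orbits n s1 s2) (dih_orbits n t1 t2)"
    and H: "\<And>C. C \<in> dih_orbits n s1 s2 \<Longrightarrow> dih_iso_betw s1 s2 t1 t2 (H C) C (\<phi> C)"
  obtains g where "g permutes {1..n}" and "g \<circ> s1 = t1 \<circ> g" and "g \<circ> s2 = t2 \<circ> g"
proof -
  interpret S: involution_pair_Sn n s1 s2 by (rule S)
  interpret T: involution_pair_Sn n t1 t2 by (rule T)
  define g where "g x = (if x \<in> {1..n} then H (dih_orbit s1 s2 x) x else x)" for x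
  have g_on_orbit: "g y = H C y" if "C \<in> dih_orbits n s1 s2" "y \<in> C" for C y
    using that S.dih_orbit_eq_if_mem_dih_orbits partition_onD1[OF S.partition_on_dih_orbits]
    by (auto simp: g_def)
  have "bij_betw (H C) C (\<phi> C)" if "C \<in> dih_orbits n s1 s2" for C
    using H[OF that] by (simp add: dih_iso_betw_def)
  then have "bij_betw g {1..n} {1..n}"
    by (rule bij_betw_glue_partitions[OF S.partition_on_dih_orbits T.partition_on_dih_orbits \<phi> _ g_on_orbit])
  then have permutes: "g permutes {1..n}"
    by (rule bij_imp_permutes) (auto simp: g_def)
  have "g (s1 x) = t1 (g x) \<and> g (s2 x) = t2 (g x)" for x
  proof (cases "x \<in> {1..n}")
    case True
    then have "dih_orbit s1 s2 x \<in> dih_orbits n s1 s2"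
      by (simp add: dih_orbits_def)
    with H show ?thesis
      using g_on_orbit dih_orbit_s1 dih_orbit_s2 dih_orbit_refl by (simp add: dih_iso_betw_def)
  next
    case False
    then show ?thesis
      using permutes_not_in S.s1_permutes S.s2_permutes T.s1_permutes T.s2_permutes permutes
      by metis
  qed
  then show ?thesis
    using that permutes by (simp add: fun_eq_iff)
qed

lemma commuting_permutation_if_dihedral_decomp_eq:
  assumes S: "involution_pair_Sn n s1 s2" and T: "involution_pair_Sn n t1 t2"
    and decomp: "dihedral_decomp n s1 s2 = dihedral_decomp n t1 t2"
  obtains g where "g permutes {1..n}" and "g \<circ> s1 = t1 \<circ> g" and "g \<circ> s2 = t2 \<circ> g"
proof -
  obtain \<phi> where \<phi>: "bij_betw \<phi> (dih_orbits n s1 s2) (dih_orbits n t1 t2)"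
    and type_card: "\<And>C. C \<in> dih_orbits n s1 s2 \<Longrightarrow>
      orbit_type t1 t2 (\<phi> C) = orbit_type s1 s2 C \<and> card (\<phi> C) = card C"
    using bij_betw_dih_orbits_preserving_type_card[OF S T decomp] by blast
  have "\<exists>h. dih_iso_betw s1 s2 t1 t2 h C (\<phi> C)" if C: "C \<in> dih_orbits n s1 s2" for C
  proof -
    obtain x x' where "C = dih_orbit s1 s2 x" "\<phi> C = dih_orbit t1 t2 x'"
      using C bij_betw_apply[OF \<phi> C] by (auto simp: dih_orbits_def)
    then show ?thesis
      using dih_iso_betw_orbits_if_type_card_eq[OF S T] type_card[OF C] by simp
  qed
  then obtain H where "\<And>C. C \<in> dih_orbits n s1 s2 \<Longrightarrow> dih_iso_betw s1 s2 t1 t2 (H C) C (\<phi> C)"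
    by metis
  with S T \<phi> show ?thesis
    using that by (rule commuting_permutation_if_orbit_isos)
qed

theorem lemma5p3:
  fixes n :: nat and s1 s2 s1' s2' :: "nat \<Rightarrow> nat"
  assumes "involution_Sn n s1" "involution_Sn n s2"
      and "involution_Sn n s1'" "involution_Sn n s2'"
  shows "(\<exists>g. g permutes {1..n} \<and> s1' = g \<circ> s1 \<circ> inv g \<and> s2' = g \<circ> s2 \<circ> inv g)
         \<longleftrightarrow> dihedral_decomp n s1 s2 = dihedral_decomp n s1' s2'"
proof -
  have S: "involution_pair_Sn n s1 s2" and T: "involution_pair_Sn n s1' s2'"
    using assms by (simp_all add: involution_pair_Sn_def)
  have "(\<exists>g. g permutes {1..n} \<and> s1' = g \<circ> s1 \<circ> inv g \<and> s2' = g \<circ> s2 \<circ> inv g) \<longleftrightarrow>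
      (\<exists>g. g permutes {1..n} \<and> g \<circ> s1 = s1' \<circ> g \<and> g \<circ> s2 = s2' \<circ> g)"
    using eq_conjugate_iff_commute by blast
  also have "\<dots> \<longleftrightarrow> dihedral_decomp n s1 s2 = dihedral_decomp n s1' s2'"
  proof
    assume "\<exists>g. g permutes {1..n} \<and> g \<circ> s1 = s1' \<circ> g \<and> g \<circ> s2 = s2' \<circ> g"
    then show "dihedral_decomp n s1 s2 = dihedral_decomp n s1' s2'"
      using dihedral_decomp_eq_if_commuting_permutation by blast
  next
    assume "dihedral_decomp n s1 s2 = dihedral_decomp n s1' s2'"
    then obtain g where "g permutes {1..n}" "g \<circ> s1 = s1' \<circ> g" "g \<circ> s2 = s2' \<circ> g"
      by (rule commuting_permutation_if_dihedral_decomp_eq[OF S T])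
    then show "\<exists>g. g permutes {1..n} \<and> g \<circ> s1 = s1' \<circ> g \<and> g \<circ> s2 = s2' \<circ> g"
      by blast
  qed
  finally show ?thesis .
qed

end
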